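(* Let $x$ be a Bertrand D-curve and $x_1$ a Bertrand partner D-curve of $x$. Then: (i) if $x$ is a geodesic curve, the geodesic torsion of $x_1$ is $\tau_{g_1} = \tau_g\cos\theta\,[\cos\theta - \lambda\tau_g\sin\theta]\left(\dfrac{ds}{ds_1}\right)^2$; (ii) if $x$ is a principal line, then $\tau_{g_1} = k_g(1+\lambda k_g)\sin\theta\cos\theta\left(\dfrac{ds}{ds_1}\right)^2$.
   Context: For a unit-speed curve $x(s)$ on an oriented surface $S\subset\mathbb{E}^3$, the Darboux frame is $\{T,g,n\}$ ($T$ unit tangent, $n$ unit surface normal along the curve, $g=n\times T$), with $\dot T = k_g g + k_n n$, $\dot g = -k_g T + \tau_g n$, $\dot n = -k_n T - \tau_g g$; $k_g,k_n,\tau_g$ are the geodesic curvature, normal curvature and geodesic torsion. For $x_1(s_1)$ on an oriented surface $S_1$ the analogous objects carry subscript $1$. $x$ is a Bertrand D-curve with Bertrand partner D-curve $x_1$ if there is a correspondence of points such that at corresponding points $g$ coincides with $g_1$; then $x(s)=x_1(s_1)+\lambda g_1(s_1)$ with $\lambda$ a nonzero constant, and $s$ is a function of $s_1$. $\theta$ is the angle between $T$ and $T_1$, oriented so that $T_1=\cos\theta\,T+\sin\theta\,n$, $n_1=-\sin\theta\,T+\cos\theta\,n$. Geodesic means $k_g=0$; principal line means $\tau_g=0$. *)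

theory Defs
  imports "HOL-Analysis.Analysis" "HOL-Analysis.Cross3"
begin

text \<open>A unit-speed curve x, defined on an open parameter set I, lying on a surface S
  with unit normal field N, together with its Darboux frame (T, g, n) and
  the geodesic curvature kg, normal curvature kn and geodesic torsion tg.\<close>
definition darboux_curve ::
  "real set \<Rightarrow> (real^3) set \<Rightarrow> (real^3 \<Rightarrow> real^3) \<Rightarrow> (real \<Rightarrow> real^3) \<Rightarrow>
   (real \<Rightarrow> real^3) \<Rightarrow> (real \<Rightarrow> real^3) \<Rightarrow> (real \<Rightarrow> real^3) \<Rightarrow>
   (real \<Rightarrow> real) \<Rightarrow> (real \<Rightarrow> real) \<Rightarrow> (real \<Rightarrow> real) \<Rightarrow> bool" where
  "darboux_curve I S N x T g n kg kn tg \<longleftrightarrow>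
     open I \<and>
     (\<forall>p\<in>S. norm (N p) = 1) \<and> continuous_on S N \<and>
     (\<forall>s\<in>I. x s \<in> S \<and> n s = N (x s) \<and>
        norm (T s) = 1 \<and> T s \<bullet> n s = 0 \<and> g s = cross3 (n s) (T s) \<and>
        (x has_vector_derivative T s) (at s) \<and>
        (T has_vector_derivative (kg s *\<^sub>R g s + kn s *\<^sub>R n s)) (at s) \<and>
        (g has_vector_derivative (- kg s *\<^sub>R T s + tg s *\<^sub>R n s)) (at s) \<and>
        (n has_vector_derivative (- kn s *\<^sub>R T s - tg s *\<^sub>R g s)) (at s))"

end

theory Submission
  imports Defs
begin

text \<open>Differentiating the Bertrand relations x o phi = x1 + lam g1 and g o phi = g1 gives
  phi' T = (1 - lam kg1) T1 + lam tg1 n1 and phi' (- kg T + tg n) = - kg1 T1 + tg1 n1.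
  Both (T, n) and (T1, n1) are orthonormal bases of the plane orthogonal to g = g1, related by
  the rotation through theta; comparing coefficients gives tg1 = phi' (kg sin theta + tg cos theta)
  and phi' ((1 + lam kg) cos theta - lam tg sin theta) = 1. Multiplying the two gives a formula
  for tg1 into which kg = 0 or tg = 0 can be substituted directly.\<close>

lemma rotated_frame_coefficients:
  fixes a b T1 n1 :: "'a::real_inner" and p c s kg tg kg1 tg1 lam :: real
  assumes ab: "a \<bullet> a = 1" "b \<bullet> b = 1" "a \<bullet> b = 0"
    and T1: "T1 = c *\<^sub>R a + s *\<^sub>R b" and n1: "n1 = - s *\<^sub>R a + c *\<^sub>R b"
    and T1n1: "T1 \<bullet> T1 = 1" "n1 \<bullet> n1 = 1" "T1 \<bullet> n1 = 0"
    and pos: "p *\<^sub>R a = (1 - lam * kg1) *\<^sub>R T1 + (lam * tg1) *\<^sub>R n1"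
    and frame: "p *\<^sub>R (- kg *\<^sub>R a + tg *\<^sub>R b) = - kg1 *\<^sub>R T1 + tg1 *\<^sub>R n1"
  shows "tg1 = p * (kg * s + tg * c)" "kg1 = p * (kg * c - tg * s)" "p * c = 1 - lam * kg1"
proof -
  have ba: "b \<bullet> a = 0" and n1T1: "n1 \<bullet> T1 = 0"
    using ab T1n1 by (simp_all add: inner_commute)
  have "tg1 = (p *\<^sub>R (- kg *\<^sub>R a + tg *\<^sub>R b)) \<bullet> n1"
    unfolding frame using T1n1 n1T1 by (simp add: inner_add_left inner_diff_left)
  also have "\<dots> = p * (kg * s + tg * c)"
    unfolding n1 using ab ba by (simp add: inner_add_left inner_add_right algebra_simps)
  finally show "tg1 = p * (kg * s + tg * c)" .
  have "- kg1 = (p *\<^sub>R (- kg *\<^sub>R a + tg *\<^sub>R b)) \<bullet> T1"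
    unfolding frame using T1n1 n1T1 by (simp add: inner_add_left inner_diff_left)
  also have "\<dots> = - p * (kg * c - tg * s)"
    unfolding T1 using ab ba by (simp add: inner_add_left inner_add_right algebra_simps)
  finally show "kg1 = p * (kg * c - tg * s)" by simp
  have "1 - lam * kg1 = (p *\<^sub>R a) \<bullet> T1"
    unfolding pos using T1n1 n1T1 by (simp add: inner_add_left)
  also have "\<dots> = p * c"
    unfolding T1 using ab ba by (simp add: inner_add_left inner_add_right)
  finally show "p * c = 1 - lam * kg1" by simp
qed

lemma darboux_curve_orthonormal:
  assumes "darboux_curve I S N x T g n kg kn tg" and "s \<in> I"
  shows "T s \<bullet> T s = 1" "n s \<bullet> n s = 1" "T s \<bullet> n s = 0"
  using assms unfolding darboux_curve_def by (auto simp: norm_eq_1)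

locale bertrand_D_pair =
  fixes I J :: "real set" and S S1 :: "(real^3) set" and N N1 :: "real^3 \<Rightarrow> real^3"
    and x T g n x1 T1 g1 n1 :: "real \<Rightarrow> real^3"
    and kg kn tg kg1 kn1 tg1 :: "real \<Rightarrow> real"
    and \<phi> \<phi>' \<theta> :: "real \<Rightarrow> real" and lam :: real
  assumes curve: "darboux_curve I S N x T g n kg kn tg"
    and partner: "darboux_curve J S1 N1 x1 T1 g1 n1 kg1 kn1 tg1"
    and phi_maps: "\<forall>s1\<in>J. \<phi> s1 \<in> I"
    and phi_deriv: "\<forall>s1\<in>J. (\<phi> has_real_derivative \<phi>' s1) (at s1)"
    and bertrand_pos: "\<forall>s1\<in>J. x (\<phi> s1) = x1 s1 + lam *\<^sub>R g1 s1"
    and bertrand_g: "\<forall>s1\<in>J. g (\<phi> s1) = g1 s1"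
    and angle_T: "\<forall>s1\<in>J. T1 s1 = cos (\<theta> s1) *\<^sub>R T (\<phi> s1) + sin (\<theta> s1) *\<^sub>R n (\<phi> s1)"
    and angle_n: "\<forall>s1\<in>J. n1 s1 = - sin (\<theta> s1) *\<^sub>R T (\<phi> s1) + cos (\<theta> s1) *\<^sub>R n (\<phi> s1)"
begin

lemma phi_has_vector_derivative:
  assumes "s1 \<in> J"
  shows "(\<phi> has_vector_derivative \<phi>' s1) (at s1)"
  using phi_deriv assms by (simp add: has_real_derivative_iff_has_vector_derivative)

lemma derivative_bertrand_pos:
  assumes s1: "s1 \<in> J"
  shows "\<phi>' s1 *\<^sub>R T (\<phi> s1) = (1 - lam * kg1 s1) *\<^sub>R T1 s1 + (lam * tg1 s1) *\<^sub>R n1 s1"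
proof -
  have "(x has_vector_derivative T (\<phi> s1)) (at (\<phi> s1))"
    using curve phi_maps s1 unfolding darboux_curve_def by auto
  then have chain: "((x \<circ> \<phi>) has_vector_derivative \<phi>' s1 *\<^sub>R T (\<phi> s1)) (at s1)"
    using vector_diff_chain_at phi_has_vector_derivative[OF s1] by blast
  have "((x \<circ> \<phi>) has_vector_derivative
          T1 s1 + lam *\<^sub>R (- kg1 s1 *\<^sub>R T1 s1 + tg1 s1 *\<^sub>R n1 s1)) (at s1)"
  proof (rule has_vector_derivative_transform_within_open[where S=J and f="\<lambda>t. x1 t + lam *\<^sub>R g1 t"])
    show "((\<lambda>t. x1 t + lam *\<^sub>R g1 t) has_vector_derivative
            T1 s1 + lam *\<^sub>R (- kg1 s1 *\<^sub>R T1 s1 + tg1 s1 *\<^sub>R n1 s1)) (at s1)"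
      using partner s1 unfolding darboux_curve_def by (auto intro!: derivative_eq_intros)
  qed (use partner s1 bertrand_pos in \<open>auto simp: darboux_curve_def\<close>)
  with chain show ?thesis
    using vector_derivative_unique_at by (fastforce simp: algebra_simps)
qed

lemma derivative_bertrand_g:
  assumes s1: "s1 \<in> J"
  shows "\<phi>' s1 *\<^sub>R (- kg (\<phi> s1) *\<^sub>R T (\<phi> s1) + tg (\<phi> s1) *\<^sub>R n (\<phi> s1))
           = - kg1 s1 *\<^sub>R T1 s1 + tg1 s1 *\<^sub>R n1 s1"
proof -
  have "(g has_vector_derivative - kg (\<phi> s1) *\<^sub>R T (\<phi> s1) + tg (\<phi> s1) *\<^sub>R n (\<phi> s1)) (at (\<phi> s1))"
    using curve phi_maps s1 unfolding darboux_curve_def by blast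
  then have chain: "((g \<circ> \<phi>) has_vector_derivative
      \<phi>' s1 *\<^sub>R (- kg (\<phi> s1) *\<^sub>R T (\<phi> s1) + tg (\<phi> s1) *\<^sub>R n (\<phi> s1))) (at s1)"
    using vector_diff_chain_at phi_has_vector_derivative[OF s1] by blast
  have "((g \<circ> \<phi>) has_vector_derivative - kg1 s1 *\<^sub>R T1 s1 + tg1 s1 *\<^sub>R n1 s1) (at s1)"
    by (rule has_vector_derivative_transform_within_open[where S=J and f=g1])
       (use partner s1 bertrand_g in \<open>auto simp: darboux_curve_def\<close>)
  with chain show ?thesis
    by (rule vector_derivative_unique_at)
qed

lemma partner_curvatures:
  assumes s1: "s1 \<in> J"
  shows "tg1 s1 = \<phi>' s1 * (kg (\<phi> s1) * sin (\<theta> s1) + tg (\<phi> s1) * cos (\<theta> s1))"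
    and "\<phi>' s1 * ((1 + lam * kg (\<phi> s1)) * cos (\<theta> s1) - lam * tg (\<phi> s1) * sin (\<theta> s1)) = 1"
proof -
  have sI: "\<phi> s1 \<in> I" using phi_maps s1 by auto
  note coeffs = rotated_frame_coefficients[OF darboux_curve_orthonormal[OF curve sI]
      angle_T[rule_format, OF s1] angle_n[rule_format, OF s1]
      darboux_curve_orthonormal[OF partner s1]
      derivative_bertrand_pos[OF s1] derivative_bertrand_g[OF s1]]
  show "tg1 s1 = \<phi>' s1 * (kg (\<phi> s1) * sin (\<theta> s1) + tg (\<phi> s1) * cos (\<theta> s1))"
    by (fact coeffs(1))
  show "\<phi>' s1 * ((1 + lam * kg (\<phi> s1)) * cos (\<theta> s1) - lam * tg (\<phi> s1) * sin (\<theta> s1)) = 1"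
    using coeffs(3) unfolding coeffs(2) by (simp add: algebra_simps)
qed

lemma partner_geodesic_torsion:
  assumes "s1 \<in> J"
  shows "tg1 s1 = (kg (\<phi> s1) * sin (\<theta> s1) + tg (\<phi> s1) * cos (\<theta> s1))
    * ((1 + lam * kg (\<phi> s1)) * cos (\<theta> s1) - lam * tg (\<phi> s1) * sin (\<theta> s1)) * (\<phi>' s1)\<^sup>2"
proof -
  let ?A = "kg (\<phi> s1) * sin (\<theta> s1) + tg (\<phi> s1) * cos (\<theta> s1)"
  let ?B = "(1 + lam * kg (\<phi> s1)) * cos (\<theta> s1) - lam * tg (\<phi> s1) * sin (\<theta> s1)"
  have "tg1 s1 = \<phi>' s1 * ?A * (\<phi>' s1 * ?B)"
    using partner_curvatures[OF assms] by simp
  then show ?thesis by (simp add: power2_eq_square algebra_simps)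
qed

end

theorem corollary4:
  fixes I J :: "real set" and S S1 :: "(real^3) set" and N N1 :: "real^3 \<Rightarrow> real^3"
    and x T g n x1 T1 g1 n1 :: "real \<Rightarrow> real^3"
    and kg kn tg kg1 kn1 tg1 :: "real \<Rightarrow> real"
    and \<phi> \<phi>' \<theta> :: "real \<Rightarrow> real" and lam :: real
  assumes curve: "darboux_curve I S N x T g n kg kn tg"
    and partner: "darboux_curve J S1 N1 x1 T1 g1 n1 kg1 kn1 tg1"
    and lam_nz: "lam \<noteq> 0"
    and phi_maps: "\<forall>s1\<in>J. \<phi> s1 \<in> I"
    and phi_deriv: "\<forall>s1\<in>J. (\<phi> has_real_derivative \<phi>' s1) (at s1)"
    and bertrand_pos: "\<forall>s1\<in>J. x (\<phi> s1) = x1 s1 + lam *\<^sub>R g1 s1"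
    and bertrand_g: "\<forall>s1\<in>J. g (\<phi> s1) = g1 s1"
    and angle_T: "\<forall>s1\<in>J. T1 s1 = cos (\<theta> s1) *\<^sub>R T (\<phi> s1) + sin (\<theta> s1) *\<^sub>R n (\<phi> s1)"
    and angle_n: "\<forall>s1\<in>J. n1 s1 = - sin (\<theta> s1) *\<^sub>R T (\<phi> s1) + cos (\<theta> s1) *\<^sub>R n (\<phi> s1)"
  shows "((\<forall>s\<in>I. kg s = 0) \<longrightarrow>
            (\<forall>s1\<in>J. tg1 s1 = tg (\<phi> s1) * cos (\<theta> s1)
                 * (cos (\<theta> s1) - lam * tg (\<phi> s1) * sin (\<theta> s1)) * (\<phi>' s1)\<^sup>2))
       \<and> ((\<forall>s\<in>I. tg s = 0) \<longrightarrow>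
            (\<forall>s1\<in>J. tg1 s1 = kg (\<phi> s1) * (1 + lam * kg (\<phi> s1))
                 * sin (\<theta> s1) * cos (\<theta> s1) * (\<phi>' s1)\<^sup>2))"
proof -
  interpret bertrand_D_pair I J S S1 N N1 x T g n x1 T1 g1 n1 kg kn tg kg1 kn1 tg1 \<phi> \<phi>' \<theta> lam
    by unfold_locales (fact assms)+
  show ?thesis
  proof (intro conjI impI ballI)
    fix s1 assume "\<forall>s\<in>I. kg s = 0" and s1: "s1 \<in> J"
    then have "kg (\<phi> s1) = 0" using phi_maps by auto
    with partner_geodesic_torsion[OF s1]
    show "tg1 s1 = tg (\<phi> s1) * cos (\<theta> s1)
        * (cos (\<theta> s1) - lam * tg (\<phi> s1) * sin (\<theta> s1)) * (\<phi>' s1)\<^sup>2"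
      by simp
  next
    fix s1 assume "\<forall>s\<in>I. tg s = 0" and s1: "s1 \<in> J"
    then have "tg (\<phi> s1) = 0" using phi_maps by auto
    with partner_geodesic_torsion[OF s1]
    show "tg1 s1 = kg (\<phi> s1) * (1 + lam * kg (\<phi> s1))
        * sin (\<theta> s1) * cos (\<theta> s1) * (\<phi>' s1)\<^sup>2"
      by (simp add: algebra_simps)
  qed
qed

end
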